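(* Let $X \subset \mathbb{R}^{2n}$ be a symplectically self-polar convex body with $C^1$-smooth boundary and let $Y=\{x+f(x): x\in\partial X\}$. Then for every $v\in\mathbb{R}^{2n}\setminus\{0\}$ the ray $\{tv: t\ge 0\}$ intersects $Y$ in exactly one point; thus $Y$ is the boundary of a star-shaped (not necessarily convex) body. If moreover $\partial X$ is $C^2$-smooth, then every such ray is transversal to $Y$, i.e. for every $x\in\partial X$ the vector $x+f(x)$ does not lie in the tangent space $T_{x+f(x)}Y=\{\xi+\nabla_\xi f:\ \xi\in T_x\partial X\}$.
   Context: $\mathbb{R}^{2n}\cong\mathbb{C}^n$, $J$ is multiplication by $\sqrt{-1}$, $\omega(u,v)=\langle Ju,v\rangle$. For a convex body $X$ with origin in its interior, $X^\omega=\{y: \omega(x,y)\le 1\ \forall x\in X\}$; $X$ is symplectically self-polar if $X=X^\omega$. For $C^1$ boundary, $f\colon\partial X\to\partial X^\omega$ assigns to $x$ the unique $f(x)\in X^\omega$ with $\omega(x,f(x))=1$; when $X=X^\omega$, $f$ maps $\partial X$ to itself, and for $C^2$ boundary $f$ is $C^1$ and $Y$ is a $C^1$ embedded hypersurface. *)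

theory Defs
  imports "HOL-Analysis.Analysis"
begin

text \<open>R^{2n} is identified with C^n, modelled as complex ^ 'n with its real inner product.\<close>

definition cJ :: "complex ^ 'n \<Rightarrow> complex ^ 'n" where
  "cJ x = (\<chi> i. \<i> * x $ i)"

definition omega :: "complex ^ 'n \<Rightarrow> complex ^ 'n \<Rightarrow> real" where
  "omega u v = inner (cJ u) v"

definition symp_polar :: "(complex ^ 'n) set \<Rightarrow> (complex ^ 'n) set" where
  "symp_polar X = {y. \<forall>x\<in>X. omega x y \<le> 1}"

definition convex_body_0 :: "(complex ^ 'n) set \<Rightarrow> bool" where
  "convex_body_0 X \<longleftrightarrow> compact X \<and> convex X \<and> 0 \<in> interior X"

definition symp_self_polar :: "(complex ^ 'n) set \<Rightarrow> bool" where
  "symp_self_polar X \<longleftrightarrow> X = symp_polar X"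

definition C1_boundary :: "('a::euclidean_space) set \<Rightarrow> bool" where
  "C1_boundary X \<longleftrightarrow> (\<forall>x\<in>frontier X. \<exists>U g G. open U \<and> x \<in> U \<and>
      (\<forall>y\<in>U. (g has_derivative (\<lambda>h. G y \<bullet> h)) (at y)) \<and> continuous_on U G \<and>
      G x \<noteq> 0 \<and> (\<forall>y\<in>U. y \<in> X \<longleftrightarrow> g y \<le> (0::real)))"

definition C2_boundary :: "('a::euclidean_space) set \<Rightarrow> bool" where
  "C2_boundary X \<longleftrightarrow> (\<forall>x\<in>frontier X. \<exists>U g G. open U \<and> x \<in> U \<and>
      (\<forall>y\<in>U. (g has_derivative (\<lambda>h. G y \<bullet> h)) (at y)) \<and> continuous_on U G \<and>
      (\<forall>b\<in>Basis. \<exists>H. (\<forall>y\<in>U. ((\<lambda>z. G z \<bullet> b) has_derivative (\<lambda>h. H y \<bullet> h)) (at y))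
                        \<and> continuous_on U H) \<and>
      G x \<noteq> 0 \<and> (\<forall>y\<in>U. y \<in> X \<longleftrightarrow> g y \<le> (0::real)))"

definition sp_f :: "(complex ^ 'n) set \<Rightarrow> complex ^ 'n \<Rightarrow> complex ^ 'n" where
  "sp_f X x = (THE y. y \<in> symp_polar X \<and> omega x y = 1)"

definition Yset :: "(complex ^ 'n) set \<Rightarrow> (complex ^ 'n) set" where
  "Yset X = {x + sp_f X x | x. x \<in> frontier X}"

text \<open>T_{x+f(x)} Y = { xi + nabla_xi f : xi in T_x dX }, where tangent vectors xi are velocities
  of curves gamma in dX through x and nabla_xi f = (f o gamma)'(0).\<close>
definition tangent_Y :: "(complex ^ 'n) set \<Rightarrow> complex ^ 'n \<Rightarrow> (complex ^ 'n) set" where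
  "tangent_Y X x = {\<xi> + \<eta> | \<xi> \<eta>. \<exists>\<gamma>. (\<forall>t. \<gamma> t \<in> frontier X) \<and> \<gamma> 0 = x \<and>
      (\<gamma> has_vector_derivative \<xi>) (at 0) \<and>
      ((sp_f X \<circ> \<gamma>) has_vector_derivative \<eta>) (at 0)}"

end

(* Everything rests on the inequality omega(a, b) <= 1 for a, b in X, which is self-polarity.
   If two points x + f x and x' + f x' of Y lie on one ray, x' + f x' = s (x + f x) with s > 0,
   then testing the inequality on (x, f x') and (x', f x) forces s = 1 and omega(x, x') = 0, and
   uniqueness of the partner f x gives x' = x. Hence x |-> sgn (x + f x) is a continuous injection
   of the topological sphere frontier X into the unit sphere, and by invariance of domain it is
   onto; this is the ray statement. Transversality comes from expanding the same inequality to
   first and second order along a curve in frontier X. *)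

theory Submission
  imports Defs
begin

lemma cJ_cJ [simp]: "cJ (cJ a) = - a"
  by (simp add: cJ_def vec_eq_iff)

lemma cJ_add: "cJ (a + b) = cJ a + cJ b"
  by (simp add: cJ_def vec_eq_iff algebra_simps)

lemma cJ_diff: "cJ (a - b) = cJ a - cJ b"
  by (simp add: cJ_def vec_eq_iff algebra_simps)

lemma cJ_scaleR: "cJ (r *\<^sub>R a) = r *\<^sub>R cJ a"
  by (simp add: cJ_def vec_eq_iff scaleR_conv_of_real algebra_simps)

lemma bounded_linear_cJ: "bounded_linear cJ"
  by (simp add: linear_conv_bounded_linear[symmetric] linearI cJ_add cJ_scaleR)

lemma inner_cJ_cJ [simp]: "cJ a \<bullet> cJ b = a \<bullet> b"
  by (auto simp: cJ_def inner_vec_def inner_complex_def intro!: sum.cong)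

lemma inner_cJ_left: "cJ a \<bullet> b = - (a \<bullet> cJ b)"
  by (simp add: cJ_def inner_vec_def inner_complex_def sum_negf[symmetric] algebra_simps)

lemma omega_eq_inner: "omega a b = a \<bullet> (- cJ b)"
  by (simp add: omega_def inner_cJ_left)

lemma omega_antisym: "omega a b = - omega b a"
  unfolding omega_def by (metis inner_cJ_left inner_commute)

lemma omega_self [simp]: "omega a a = 0"
  using omega_antisym[of a a] by simp

lemma omega_add_left [simp]: "omega (a + b) c = omega a c + omega b c"
  and omega_add_right [simp]: "omega a (b + c) = omega a b + omega a c"
  and omega_diff_left [simp]: "omega (a - b) c = omega a c - omega b c"
  and omega_diff_right [simp]: "omega a (b - c) = omega a b - omega a c"
  and omega_minus_right [simp]: "omega a (- b) = - omega a b"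
  and omega_scaleR_left [simp]: "omega (r *\<^sub>R a) b = r * omega a b"
  and omega_scaleR_right [simp]: "omega a (r *\<^sub>R b) = r * omega a b"
  by (simp_all add: omega_def cJ_add cJ_scaleR cJ_diff inner_add_left inner_diff_left
      inner_add_right inner_diff_right)

lemma tendsto_omega [tendsto_intros]:
  assumes "(f \<longlongrightarrow> a) F" "(g \<longlongrightarrow> b) F"
  shows "((\<lambda>x. omega (f x) (g x)) \<longlongrightarrow> omega a b) F"
  unfolding omega_def
  by (intro tendsto_intros bounded_linear.tendsto[OF bounded_linear_cJ] assms)

lemma continuous_on_omega [continuous_intros]:
  assumes "continuous_on S f" "continuous_on S g"
  shows "continuous_on S (\<lambda>x. omega (f x) (g x))"
  using assms by (simp add: continuous_on_def tendsto_omega)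

lemma has_vector_derivative_imp_difference_quotient:
  fixes f :: "real \<Rightarrow> 'a::real_normed_vector"
  assumes "(f has_vector_derivative d) (at t)"
  shows "((\<lambda>s. (f s - f t) /\<^sub>R (s - t)) \<longlongrightarrow> d) (at t)"
proof -
  have lim: "((\<lambda>s. norm (f s - f t - (s - t) *\<^sub>R d) / norm (s - t)) \<longlongrightarrow> 0) (at t)"
    using assms by (simp add: has_vector_derivative_def has_derivative_iff_norm)
  have eq: "norm (f s - f t - (s - t) *\<^sub>R d) / norm (s - t) = norm ((f s - f t) /\<^sub>R (s - t) - d)"
    if "s \<noteq> t" for s
  proof -
    have "(f s - f t) /\<^sub>R (s - t) - d = (1 / (s - t)) *\<^sub>R (f s - f t - (s - t) *\<^sub>R d)"
      using that by (simp add: scaleR_diff_right divide_inverse_commute)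
    then show ?thesis
      by (simp add: divide_inverse)
  qed
  have "((\<lambda>s. norm ((f s - f t) /\<^sub>R (s - t) - d)) \<longlongrightarrow> 0) (at t)"
    by (rule Lim_transform_eventually[OF lim])
      (use eq in \<open>auto simp only: eventually_at_filter intro!: always_eventually\<close>)
  then show ?thesis
    using tendsto_norm_zero_iff LIM_zero_cancel by blast
qed

lemma has_vector_derivative_zero_at_maximum:
  fixes \<phi> :: "real \<Rightarrow> real"
  assumes "(\<phi> has_vector_derivative l) (at t)" and "\<And>s. \<phi> s \<le> \<phi> t"
  shows "l = 0"
  using assms DERIV_local_max[OF _ zero_less_one]
  by (simp add: has_real_derivative_iff_has_vector_derivative[symmetric])

lemma inner_nonpos_if_descent_direction:
  fixes g :: "'a::euclidean_space \<Rightarrow> real"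
  assumes U: "open U" "x \<in> U" and g: "(g has_derivative (\<lambda>h. G \<bullet> h)) (at x)"
    and sublevel: "g x \<le> 0" "\<And>y. y \<in> U \<Longrightarrow> g y \<le> 0 \<Longrightarrow> y \<in> S"
    and supporting: "\<And>z. z \<in> S \<Longrightarrow> z \<bullet> u \<le> x \<bullet> u"
    and descent: "G \<bullet> h < 0"
  shows "u \<bullet> h \<le> 0"
proof -
  have "((\<lambda>t. x + t *\<^sub>R h) has_derivative (\<lambda>t. t *\<^sub>R h)) (at 0)"
    by (auto intro!: derivative_eq_intros)
  moreover have "(g has_derivative (\<lambda>k. G \<bullet> k)) (at (x + 0 *\<^sub>R h))"
    using g by simp
  ultimately have "((g \<circ> (\<lambda>t. x + t *\<^sub>R h)) has_derivative (\<lambda>k. G \<bullet> k) \<circ> (\<lambda>t. t *\<^sub>R h)) (at 0)"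
    by (rule diff_chain_at)
  moreover have "(\<lambda>k. G \<bullet> k) \<circ> (\<lambda>t. t *\<^sub>R h) = (*) (G \<bullet> h)"
    by (simp add: fun_eq_iff)
  ultimately have "((\<lambda>t. g (x + t *\<^sub>R h)) has_real_derivative G \<bullet> h) (at 0)"
    by (simp only: has_field_derivative_def comp_def)
  from DERIV_neg_dec_right[OF this descent]
  have "\<forall>\<^sub>F t in at_right 0. g (x + t *\<^sub>R h) < g x"
    by (simp add: eventually_at_right_field)
  moreover have "((\<lambda>t. x + t *\<^sub>R h) \<longlongrightarrow> x) (at_right 0)"
    by (auto intro!: tendsto_eq_intros)
  then have "\<forall>\<^sub>F t in at_right 0. x + t *\<^sub>R h \<in> U"
    using U topological_tendstoD by blast
  ultimately have "\<forall>\<^sub>F t in at_right 0. 0 < t \<and> g (x + t *\<^sub>R h) < g x \<and> x + t *\<^sub>R h \<in> U"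
    using eventually_at_right_less by (intro eventually_conj)
  then obtain t :: real where "0 < t" "g (x + t *\<^sub>R h) < g x" "x + t *\<^sub>R h \<in> U"
    using eventually_happens'[OF trivial_limit_at_right_real] by blast
  with sublevel have "0 < t" "x + t *\<^sub>R h \<in> S"
    by auto
  with supporting have "t * (h \<bullet> u) \<le> 0"
    by (force simp: inner_add_left)
  with \<open>0 < t\<close> show ?thesis
    by (simp add: inner_commute mult_le_0_iff)
qed

lemma eq_scaleR_if_nonpos_on_open_halfspace:
  fixes u G :: "'a::real_inner"
  assumes "G \<noteq> 0" and nonpos: "\<And>h. G \<bullet> h < 0 \<Longrightarrow> u \<bullet> h \<le> 0"
  shows "u = ((u \<bullet> G) / (G \<bullet> G)) *\<^sub>R G"
proof -
  define w where "w = u - ((u \<bullet> G) / (G \<bullet> G)) *\<^sub>R G"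
  have Gw: "G \<bullet> w = 0"
    using assms by (simp add: w_def inner_diff_right inner_commute)
  have "((\<lambda>\<epsilon>. u \<bullet> (w - \<epsilon> *\<^sub>R G)) \<longlongrightarrow> u \<bullet> w) (at_right 0)"
    by (auto intro!: tendsto_eq_intros)
  moreover have "\<forall>\<^sub>F \<epsilon> in at_right 0. u \<bullet> (w - \<epsilon> *\<^sub>R G) \<le> 0"
  proof (rule eventually_mono[OF eventually_at_right_less])
    fix \<epsilon> :: real
    assume "0 < \<epsilon>"
    with Gw \<open>G \<noteq> 0\<close> have "G \<bullet> (w - \<epsilon> *\<^sub>R G) < 0"
      by (simp add: inner_diff_right)
    then show "u \<bullet> (w - \<epsilon> *\<^sub>R G) \<le> 0"
      by (rule nonpos)
  qed
  ultimately have "u \<bullet> w \<le> 0"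
    by (rule tendsto_upperbound) simp
  moreover have "u \<bullet> w = w \<bullet> w"
    using Gw by (simp add: w_def inner_diff_left inner_commute)
  ultimately have "w = 0"
    by (metis inner_ge_zero inner_eq_zero_iff order_antisym)
  then show ?thesis
    by (simp add: w_def)
qed

text \<open>If the image missed a point u of the sphere, then composing with the stereographic
  homeomorphism from the sphere minus u onto a hyperplane T would, by invariance of domain, give a
  compact subset of T that is open in T, hence all of T; but T is unbounded.\<close>

lemma inj_frontier_to_sphere_surj:
  fixes f :: "'a::euclidean_space \<Rightarrow> 'a"
  assumes S: "compact S" "convex S" "interior S \<noteq> {}" and dim: "2 \<le> DIM('a)"
    and contf: "continuous_on (frontier S) f" and injf: "inj_on f (frontier S)"
    and fim: "f ` frontier S \<subseteq> sphere 0 1"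
  shows "f ` frontier S = sphere 0 1"
proof (rule ccontr)
  assume "f ` frontier S \<noteq> sphere 0 1"
  with fim obtain u where u: "u \<in> sphere (0::'a) 1" and fim_u: "f ` frontier S \<subseteq> sphere 0 1 - {u}"
    by blast
  obtain c :: 'a where "c \<in> Basis"
    using nonempty_Basis by blast
  then have "c \<noteq> 0"
    by auto
  define T where "T = {x::'a. c \<bullet> x = 0}"
  have affT: "affine T" and adT: "aff_dim T = int DIM('a) - 1"
    using \<open>c \<noteq> 0\<close> by (simp_all add: T_def affine_hyperplane)
  have "(sphere 0 1 - {u}) homeomorphic T"
    unfolding T_def using u \<open>c \<noteq> 0\<close> by (intro homeomorphic_punctured_sphere_hyperplane) auto
  then obtain g h where hom: "homeomorphism (sphere 0 1 - {u}) T g h"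
    by (auto simp: homeomorphic_def)
  have contgf: "continuous_on (frontier S) (g \<circ> f)"
    using contf continuous_on_subset[OF homeomorphism_cont1[OF hom] fim_u]
    by (rule continuous_on_compose)
  have "inj_on g (sphere 0 1 - {u})"
    using homeomorphism_apply1[OF hom] by (rule inj_on_inverseI)
  then have injgf: "inj_on (g \<circ> f) (frontier S)"
    using injf fim_u by (intro comp_inj_on) (auto intro: inj_on_subset)
  have gfim: "(g \<circ> f) ` frontier S \<subseteq> T"
    using fim_u homeomorphism_image1[OF hom] by auto
  have "openin (top_of_set T) ((g \<circ> f) ` frontier S)"
  proof (rule invariance_of_domain_sphere_affine_set_gen[OF contgf injgf _ _ _ affT])
    show "aff_dim T < aff_dim S"
      using S adT by (simp add: aff_dim_nonempty_interior)
    show "openin (top_of_set (rel_frontier S)) (frontier S)"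
      using S by (simp add: rel_frontier_nonempty_interior)
  qed (use S gfim compact_imp_bounded in auto)
  moreover have "closedin (top_of_set T) ((g \<circ> f) ` frontier S)"
    using gfim S by (intro closed_subset compact_imp_closed compact_continuous_image contgf) auto
  moreover have "frontier S \<noteq> {}"
  proof -
    have "S \<noteq> {}" "S \<noteq> UNIV"
      using S interior_subset compact_imp_bounded not_bounded_UNIV by blast+
    then show ?thesis
      by (simp add: frontier_eq_empty)
  qed
  moreover have "connected T"
    unfolding T_def by (rule convex_connected[OF convex_hyperplane])
  ultimately have "(g \<circ> f) ` frontier S = T"
    unfolding connected_clopen by blast
  then have "bounded T"
    using S by (metis compact_continuous_image contgf compact_imp_bounded compact_frontier)
  then have "aff_dim T \<le> 0"
    using affT affine_bounded_eq_trivial by fastforce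
  with adT dim show False
    by simp
qed

lemma eq_scaleR_if_sgn_eq:
  fixes a b :: "'a::real_normed_vector"
  assumes "sgn a = sgn b" and "a \<noteq> 0"
  shows "b = (norm b / norm a) *\<^sub>R a"
proof -
  have "b = norm b *\<^sub>R sgn b"
    by (cases "b = 0") (simp_all add: sgn_div_norm)
  also have "\<dots> = norm b *\<^sub>R sgn a"
    using assms by simp
  also have "\<dots> = (norm b / norm a) *\<^sub>R a"
    by (simp add: sgn_div_norm divide_inverse)
  finally show ?thesis .
qed

locale symp_self_polar_body =
  fixes X :: "(complex ^ 'n) set"
  assumes convex_body: "convex_body_0 X" and self_polar: "symp_self_polar X"
begin

lemma compact: "compact X" and convex: "convex X" and zero_in_interior: "0 \<in> interior X"
  using convex_body by (auto simp: convex_body_0_def)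

lemma frontier_subset: "frontier X \<subseteq> X"
  using compact by (simp add: compact_imp_closed frontier_subset_closed)

lemma omega_le_1: "a \<in> X \<Longrightarrow> b \<in> X \<Longrightarrow> omega a b \<le> 1"
  using self_polar by (auto simp: symp_self_polar_def symp_polar_def)

lemma mem_if_omega_le_1: "(\<And>a. a \<in> X \<Longrightarrow> omega a b \<le> 1) \<Longrightarrow> b \<in> X"
  using self_polar by (auto simp: symp_self_polar_def symp_polar_def)

text \<open>The partner is read off a supporting half-space {z. z \<bullet> u \<le> x \<bullet> u} at x (here u = -a):
  since 0 is interior, x \<bullet> u > 0, and y with -J y = u / (x \<bullet> u) works.\<close>

lemma ex_partner:
  assumes "x \<in> frontier X"
  shows "\<exists>y\<in>X. omega x y = 1"
proof -
  have "rel_interior X = interior X"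
    using zero_in_interior by (metis empty_iff rel_interior_nonempty_interior)
  moreover have "x \<in> closure X" "x \<notin> rel_interior X"
    using assms calculation by (auto simp: frontier_def)
  ultimately obtain a where
    supp: "\<And>z. z \<in> closure X \<Longrightarrow> a \<bullet> x \<le> a \<bullet> z" and strict: "\<And>z. z \<in> interior X \<Longrightarrow> a \<bullet> x < a \<bullet> z"
    using supporting_hyperplane_relative_frontier[OF convex] by metis
  have pos: "0 < x \<bullet> (- a)"
    using strict[OF zero_in_interior] by (simp add: inner_commute)
  define y where "y = (1 / (x \<bullet> (- a))) *\<^sub>R cJ (- a)"
  have omega_y: "omega z y = (z \<bullet> (- a)) / (x \<bullet> (- a))" for z
    by (simp add: y_def omega_def)
  have "y \<in> X"
    using supp closure_subset pos by (intro mem_if_omega_le_1) (force simp: omega_y inner_commute)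
  moreover have "omega x y = 1"
    using pos by (simp add: omega_y)
  ultimately show ?thesis
    by blast
qed

lemma partner_sums_on_ray:
  assumes "x \<in> X" "y \<in> X" "x' \<in> X" "y' \<in> X" "omega x y = 1" "omega x' y' = 1"
    and eq: "x' + y' = s *\<^sub>R (x + y)" and "s > 0"
  shows "s = 1 \<and> omega x x' = 0"
proof -
  define c where "c = omega x x'"
  have "y' = s *\<^sub>R (x + y) - x'"
    using eq by (simp add: algebra_simps)
  with assms omega_le_1[of x y'] have A: "s - c \<le> 1"
    by (simp add: c_def)
  have sy: "s *\<^sub>R y = x' + y' - s *\<^sub>R x"
    using eq by (simp add: algebra_simps)
  have "omega x' (s *\<^sub>R y) \<le> s"
    using omega_le_1[of x' y] assms by simp
  then have "omega x' (x' + y' - s *\<^sub>R x) \<le> s"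
    by (simp only: sy)
  then have B: "1 + s * c \<le> s"
    using \<open>omega x' y' = 1\<close> by (simp add: c_def omega_antisym[of x' x])
  have "s * (s - 1) \<le> s * c"
    using A \<open>s > 0\<close> by (intro mult_left_mono) auto
  with B have "(s - 1)\<^sup>2 \<le> 0"
    by (simp add: power2_eq_square algebra_simps)
  then have "s = 1"
    by simp
  with A B show ?thesis
    by (simp add: c_def)
qed

lemma omega_velocity_partner_eq_0:
  assumes "\<And>t. \<gamma> t \<in> X" "y \<in> X" "omega (\<gamma> 0) y = 1" and "(\<gamma> has_vector_derivative \<xi>) (at 0)"
  shows "omega \<xi> y = 0"
proof -
  have "((\<lambda>t. \<gamma> t \<bullet> (- cJ y)) has_vector_derivative \<xi> \<bullet> (- cJ y)) (at 0)"
    by (rule bounded_linear.has_vector_derivative[OF bounded_linear_inner_left assms(4)])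
  moreover have "\<gamma> t \<bullet> (- cJ y) \<le> \<gamma> 0 \<bullet> (- cJ y)" for t
    using omega_le_1[OF assms(1,2)] assms(3) by (simp only: omega_eq_inner)
  ultimately have "\<xi> \<bullet> (- cJ y) = 0"
    by (rule has_vector_derivative_zero_at_maximum)
  then show ?thesis
    by (simp add: omega_eq_inner)
qed

lemma omega_partner_velocity_eq_0:
  assumes "x \<in> X" "\<And>t. z t \<in> X" "omega x (z 0) = 1" and "(z has_vector_derivative \<eta>) (at 0)"
  shows "omega x \<eta> = 0"
proof -
  have "((\<lambda>t. cJ x \<bullet> z t) has_vector_derivative cJ x \<bullet> \<eta>) (at 0)"
    by (rule bounded_linear.has_vector_derivative[OF bounded_linear_inner_right assms(4)])
  moreover have "cJ x \<bullet> z t \<le> cJ x \<bullet> z 0" for t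
    using omega_le_1[OF assms(1,2)] assms(3) by (simp only: omega_def)
  ultimately have "cJ x \<bullet> \<eta> = 0"
    by (rule has_vector_derivative_zero_at_maximum)
  then show ?thesis
    by (simp add: omega_def)
qed

text \<open>\<omega>(\<gamma> t - \<gamma> 0, z t - z 0) = 2 - \<omega>(\<gamma> t, z 0) - \<omega>(\<gamma> 0, z t) \<ge> 0; divide by t^2 and let t \<rightarrow> 0.\<close>

lemma omega_velocities_nonneg:
  assumes "\<And>t. \<gamma> t \<in> X" "\<And>t. z t \<in> X" "\<And>t. omega (\<gamma> t) (z t) = 1"
    and \<gamma>': "(\<gamma> has_vector_derivative \<xi>) (at 0)" and z': "(z has_vector_derivative \<eta>) (at 0)"
  shows "omega \<xi> \<eta> \<ge> 0"
proof -
  have "((\<lambda>t. (\<gamma> t - \<gamma> 0) /\<^sub>R t) \<longlongrightarrow> \<xi>) (at 0)" "((\<lambda>t. (z t - z 0) /\<^sub>R t) \<longlongrightarrow> \<eta>) (at 0)"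
    using has_vector_derivative_imp_difference_quotient[OF \<gamma>']
      has_vector_derivative_imp_difference_quotient[OF z'] by simp_all
  then have lim: "((\<lambda>t. omega ((\<gamma> t - \<gamma> 0) /\<^sub>R t) ((z t - z 0) /\<^sub>R t)) \<longlongrightarrow> omega \<xi> \<eta>) (at 0)"
    by (rule tendsto_omega)
  have nonneg: "omega ((\<gamma> t - \<gamma> 0) /\<^sub>R t) ((z t - z 0) /\<^sub>R t) \<ge> 0" for t
  proof -
    have "omega (\<gamma> t - \<gamma> 0) (z t - z 0) = 2 - omega (\<gamma> t) (z 0) - omega (\<gamma> 0) (z t)"
      using assms(3)[of t] assms(3)[of 0] by simp
    also have "\<dots> \<ge> 0"
      using omega_le_1 assms(1,2) by (smt (verit))
    finally have "0 \<le> (inverse t * inverse t) * omega (\<gamma> t - \<gamma> 0) (z t - z 0)"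
      by simp
    then show ?thesis
      by (simp only: omega_scaleR_left omega_scaleR_right mult.assoc)
  qed
  show ?thesis
    by (rule tendsto_lowerbound[OF lim]) (use nonneg in auto)
qed

end

locale smooth_symp_self_polar_body = symp_self_polar_body +
  assumes C1: "C1_boundary X"
begin

text \<open>For a partner y of x, the functional -J y supports X at x, so it is a multiple of the
  gradient of a defining function at x; the normalisation \<omega>(x, y) = 1 fixes the multiple.\<close>

lemma partner_unique:
  assumes x: "x \<in> frontier X"
    and "y1 \<in> X" "omega x y1 = 1" "y2 \<in> X" "omega x y2 = 1"
  shows "y1 = y2"
proof -
  obtain U g G where U: "open U" "x \<in> U"
    and g: "(g has_derivative (\<lambda>h. G x \<bullet> h)) (at x)" and "G x \<noteq> 0"
    and sublevel: "\<And>y. y \<in> U \<Longrightarrow> y \<in> X \<longleftrightarrow> g y \<le> 0"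
    using C1 x unfolding C1_boundary_def by metis
  have "g x \<le> 0"
    using x frontier_subset U sublevel by blast
  define c where "c y = (- cJ y \<bullet> G x) / (G x \<bullet> G x)" for y
  have parallel: "- cJ y = c y *\<^sub>R G x" if "y \<in> X" "omega x y = 1" for y
    unfolding c_def
  proof (rule eq_scaleR_if_nonpos_on_open_halfspace[OF \<open>G x \<noteq> 0\<close>])
    have supporting: "z \<bullet> (- cJ y) \<le> x \<bullet> (- cJ y)" if "z \<in> X" for z
      using omega_le_1[OF \<open>z \<in> X\<close> \<open>y \<in> X\<close>] \<open>omega x y = 1\<close> by (simp only: omega_eq_inner)
    show "- cJ y \<bullet> h \<le> 0" if "G x \<bullet> h < 0" for h
      using sublevel supporting that
      by (intro inner_nonpos_if_descent_direction[OF U g \<open>g x \<le> 0\<close>, where S = X]) auto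
  qed
  have "c y * (x \<bullet> G x) = 1" if "y \<in> X" "omega x y = 1" for y
    using parallel[OF that] that by (metis inner_scaleR_right omega_eq_inner)
  then have "c y1 = c y2"
    using assms by (metis mult_cancel_right mult_zero_left zero_neq_one)
  then have "cJ (cJ y1) = cJ (cJ y2)"
    using parallel assms by (metis minus_equation_iff)
  then show ?thesis
    by simp
qed

lemma sp_f_mem: "x \<in> frontier X \<Longrightarrow> sp_f X x \<in> X"
  and omega_sp_f: "x \<in> frontier X \<Longrightarrow> omega x (sp_f X x) = 1"
proof -
  assume x: "x \<in> frontier X"
  have "\<exists>!y. y \<in> symp_polar X \<and> omega x y = 1"
    using ex_partner[OF x] partner_unique[OF x] self_polar by (auto simp: symp_self_polar_def)
  then have "sp_f X x \<in> symp_polar X \<and> omega x (sp_f X x) = 1"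
    unfolding sp_f_def by (rule theI')
  then show "sp_f X x \<in> X" "omega x (sp_f X x) = 1"
    using self_polar by (simp_all add: symp_self_polar_def)
qed

lemma sp_f_eqI: "x \<in> frontier X \<Longrightarrow> y \<in> X \<Longrightarrow> omega x y = 1 \<Longrightarrow> sp_f X x = y"
  using partner_unique sp_f_mem omega_sp_f by blast

lemma continuous_on_sp_f: "continuous_on (frontier X) (sp_f X)"
proof (rule continuous_from_closed_graph[OF compact])
  show "sp_f X \<in> frontier X \<rightarrow> X"
    using sp_f_mem by blast
  have graph: "(\<lambda>x. (x, sp_f X x)) ` frontier X = (frontier X \<times> X) \<inter> {p. omega (fst p) (snd p) = 1}"
    using sp_f_mem omega_sp_f sp_f_eqI by (auto simp: image_iff)
  have "closed {p. omega (fst p) (snd p) = 1}"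
    by (intro closed_Collect_eq continuous_intros)
  then show "closed ((\<lambda>x. (x, sp_f X x)) ` frontier X)"
    unfolding graph using compact_imp_closed[OF compact]
    by (intro closed_Int closed_Times frontier_closed)
qed

lemma Y_point_nonzero: "x \<in> frontier X \<Longrightarrow> x + sp_f X x \<noteq> 0"
  using omega_sp_f[of x] by (auto simp: add_eq_0_iff)

lemma Y_points_on_ray_eq:
  assumes x: "x \<in> frontier X" and x': "x' \<in> frontier X"
    and eq: "x' + sp_f X x' = s *\<^sub>R (x + sp_f X x)" and "s > 0"
  shows "x' = x"
proof -
  have "s = 1" and "omega x x' = 0"
    using partner_sums_on_ray[OF _ _ _ _ omega_sp_f[OF x] omega_sp_f[OF x'] eq \<open>s > 0\<close>]
      x x' frontier_subset sp_f_mem by auto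
  then have "sp_f X x' = x + sp_f X x - x'"
    using eq by (simp add: algebra_simps)
  moreover have "sp_f X x = x + sp_f X x - x'"
    using \<open>omega x x' = 0\<close> x omega_sp_f[OF x] sp_f_mem[OF x'] calculation
    by (intro sp_f_eqI) simp_all
  ultimately show ?thesis
    by simp
qed

lemma sgn_Y_point_surj: "(\<lambda>x. sgn (x + sp_f X x)) ` frontier X = sphere 0 1"
proof (rule inj_frontier_to_sphere_surj[OF compact convex])
  show "interior X \<noteq> {}"
    using zero_in_interior by blast
  show "2 \<le> DIM(complex ^ 'n)"
    by simp
  show "continuous_on (frontier X) (\<lambda>x. sgn (x + sp_f X x))"
    using Y_point_nonzero by (intro continuous_intros continuous_on_sp_f) auto
  show "inj_on (\<lambda>x. sgn (x + sp_f X x)) (frontier X)"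
  proof (rule inj_onI)
    fix x x'
    assume x: "x \<in> frontier X" and x': "x' \<in> frontier X"
      and "sgn (x + sp_f X x) = sgn (x' + sp_f X x')"
    then have "x' + sp_f X x' = (norm (x' + sp_f X x') / norm (x + sp_f X x)) *\<^sub>R (x + sp_f X x)"
      using Y_point_nonzero by (intro eq_scaleR_if_sgn_eq)
    moreover have "norm (x' + sp_f X x') / norm (x + sp_f X x) > 0"
      using Y_point_nonzero x x' by simp
    ultimately show "x = x'"
      by (rule Y_points_on_ray_eq[OF x x', THEN sym])
  qed
  show "(\<lambda>x. sgn (x + sp_f X x)) ` frontier X \<subseteq> sphere 0 1"
    using Y_point_nonzero by (auto simp: norm_sgn)
qed

lemma Yset_meets_ray_once:
  assumes "v \<noteq> 0"
  shows "\<exists>!p. p \<in> Yset X \<and> (\<exists>t\<ge>0. p = t *\<^sub>R v)"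
proof -
  have "sgn v \<in> (\<lambda>x. sgn (x + sp_f X x)) ` frontier X"
    using assms by (simp add: sgn_Y_point_surj norm_sgn)
  then obtain x where x: "x \<in> frontier X" and "sgn v = sgn (x + sp_f X x)"
    by blast
  define r where "r = norm (x + sp_f X x) / norm v"
  have "r > 0"
    using Y_point_nonzero[OF x] assms by (simp add: r_def)
  have on_ray: "x + sp_f X x = r *\<^sub>R v"
    unfolding r_def using \<open>sgn v = _\<close> assms by (rule eq_scaleR_if_sgn_eq)
  show ?thesis
  proof (rule ex1I[of _ "x + sp_f X x"])
    show "x + sp_f X x \<in> Yset X \<and> (\<exists>t\<ge>0. x + sp_f X x = t *\<^sub>R v)"
      using x on_ray \<open>r > 0\<close> unfolding Yset_def by (blast intro: less_imp_le)
  next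
    fix p
    assume "p \<in> Yset X \<and> (\<exists>t\<ge>0. p = t *\<^sub>R v)"
    then obtain x' t where x': "x' \<in> frontier X" and p: "p = x' + sp_f X x'" "p = t *\<^sub>R v"
      and "t \<ge> 0"
      unfolding Yset_def by blast
    moreover have "t \<noteq> 0"
      using Y_point_nonzero[OF x'] p by auto
    ultimately have "t > 0"
      by simp
    have "x' + sp_f X x' = (t / r) *\<^sub>R (x + sp_f X x)"
      using p on_ray \<open>r > 0\<close> by simp
    then have "x' = x"
      by (rule Y_points_on_ray_eq[OF x x']) (use \<open>t > 0\<close> \<open>r > 0\<close> in simp)
    with p show "p = x + sp_f X x"
      by simp
  qed
qed

text \<open>Writing x + f x = \<xi> + \<eta>, the first-order conditions give \<omega>(\<xi>, f x) = 0 and \<omega>(x, \<eta>) = 0,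
  whence \<omega>(\<xi>, \<eta>) = -1, contradicting the second-order condition \<omega>(\<xi>, \<eta>) \<ge> 0.\<close>

lemma Y_point_notin_tangent_Y:
  assumes x: "x \<in> frontier X"
  shows "x + sp_f X x \<notin> tangent_Y X x"
proof
  assume "x + sp_f X x \<in> tangent_Y X x"
  then obtain \<xi> \<eta> \<gamma> where eq: "x + sp_f X x = \<xi> + \<eta>" and \<gamma>: "\<And>t. \<gamma> t \<in> frontier X"
    and "\<gamma> 0 = x" and \<gamma>': "(\<gamma> has_vector_derivative \<xi>) (at 0)"
    and z': "((sp_f X \<circ> \<gamma>) has_vector_derivative \<eta>) (at 0)"
    unfolding tangent_Y_def by blast
  have \<gamma>X: "\<And>t. \<gamma> t \<in> X" and zX: "\<And>t. (sp_f X \<circ> \<gamma>) t \<in> X"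
    and omega_\<gamma>z: "\<And>t. omega (\<gamma> t) ((sp_f X \<circ> \<gamma>) t) = 1"
    using \<gamma> frontier_subset sp_f_mem omega_sp_f by auto
  have "omega \<xi> (sp_f X x) = 0"
    using \<gamma>X sp_f_mem[OF x] omega_\<gamma>z \<open>\<gamma> 0 = x\<close>
    by (intro omega_velocity_partner_eq_0[OF _ _ _ \<gamma>']) auto
  moreover have "omega x \<eta> = 0"
    using x frontier_subset zX omega_\<gamma>z[of 0] \<open>\<gamma> 0 = x\<close>
    by (intro omega_partner_velocity_eq_0[OF _ _ _ z']) auto
  moreover have "omega \<xi> \<eta> \<ge> 0"
    by (rule omega_velocities_nonneg[OF \<gamma>X zX omega_\<gamma>z \<gamma>' z'])
  moreover have "\<eta> = x + sp_f X x - \<xi>"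
    using eq by (simp add: algebra_simps)
  ultimately show False
    using omega_sp_f[OF x] by (simp add: omega_antisym[of \<xi> x])
qed

end

theorem theorem4p2:
  fixes X :: "(complex ^ 'n) set"
  assumes "convex_body_0 X" and "symp_self_polar X" and "C1_boundary X"
  shows "(\<forall>v. v \<noteq> 0 \<longrightarrow> (\<exists>!p. p \<in> Yset X \<and> (\<exists>t\<ge>0. p = t *\<^sub>R v)))
       \<and> (C2_boundary X \<longrightarrow> (\<forall>x\<in>frontier X. x + sp_f X x \<notin> tangent_Y X x))"
proof -
  interpret smooth_symp_self_polar_body X
    using assms by unfold_locales
  show ?thesis
    using Yset_meets_ray_once Y_point_notin_tangent_Y by blast
qed

end
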